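(* Let $\beta=\pi/4$ and let $F,G_1,G_2$, $X_{\pm\pm}$, $s_{\max}$, $v$, $\bar M$ be as in the context, and $N=(0,0,1)^T$. Let $\theta(\alpha)=\arcsin\left(\frac{-2\sqrt2\sin\alpha\cos\alpha}{1+\cos^2\alpha}\right)$. For every integer $n$ and every $0<\alpha<\pi/4$, $$\bar M^n(0,\alpha)N=\begin{pmatrix}0\\ \sin(4n\theta(\alpha))\\ \cos(4n\theta(\alpha))\end{pmatrix},\qquad \bar M^n(s_{\max},\alpha)\,e^{s_{\max}X_{++}}N=\begin{pmatrix}0\\ \sin((4n+1)\theta(\alpha))\\ \cos((4n+1)\theta(\alpha))\end{pmatrix}.$$
   Context: $F=\cos\alpha\begin{pmatrix}0&-1&0\\1&0&0\\0&0&0\end{pmatrix}$, $G_1=\sin\alpha\sin\beta\begin{pmatrix}0&0&0\\0&0&-1\\0&1&0\end{pmatrix}$, $G_2=\sin\alpha\cos\beta\begin{pmatrix}0&0&-1\\0&0&0\\1&0&0\end{pmatrix}$, and $X_{ab}=F+aG_1+bG_2$ for $a,b\in\{+1,-1\}$. $s_{\max}=\arccos\left(-\frac{\sin^2\alpha}{1+\cos^2\alpha}\right)$. For $s\in[0,s_{\max}]$, $v(s)=\arccos\left[\frac{d-A(s)-B(s)-C(s)}{e-A(s)+B(s)}\right]$ with $A(s)=8\cos\alpha\sin^2\alpha\sin s$, $B(s)=2\sin^2(2\alpha)\cos s$, $C(s)=4\sin^4\alpha\cos(2s)$, $d=\sin^2(2\alpha)$, $e=5+2\cos2\alpha+\cos4\alpha$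 (the duration of interior bang arcs of normal extremals of $\dot x=(F+u_1G_1+u_2G_2)x$ on $S^2$ from $N$ with first bang arc of duration $s$). $\bar M(s,\alpha)=e^{v(s)X_{++}}e^{v(s)X_{-+}}e^{v(s)X_{--}}e^{v(s)X_{+-}}$. *)

theory Defs
  imports "HOL-Analysis.Analysis"
begin

fun mat_pow :: "real^'n^'n \<Rightarrow> nat \<Rightarrow> real^'n^'n" where
  "mat_pow A 0 = mat 1"
| "mat_pow A (Suc k) = A ** mat_pow A k"

definition mat_zpow :: "real^'n^'n \<Rightarrow> int \<Rightarrow> real^'n^'n" where
  "mat_zpow A n = (if 0 \<le> n then mat_pow A (nat n) else mat_pow (matrix_inv A) (nat (- n)))"

definition mat_exp :: "real^'n^'n \<Rightarrow> real^'n^'n" where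
  "mat_exp A = (\<Sum>k. (1 / fact k) *\<^sub>R mat_pow A k)"

definition Fm :: "real \<Rightarrow> real^3^3" where
  "Fm \<alpha> = cos \<alpha> *\<^sub>R vector [vector [0, -1, 0], vector [1, 0, 0], vector [0, 0, 0]]"

definition G1m :: "real \<Rightarrow> real \<Rightarrow> real^3^3" where
  "G1m \<alpha> \<beta> = (sin \<alpha> * sin \<beta>) *\<^sub>R vector [vector [0, 0, 0], vector [0, 0, -1], vector [0, 1, 0]]"

definition G2m :: "real \<Rightarrow> real \<Rightarrow> real^3^3" where
  "G2m \<alpha> \<beta> = (sin \<alpha> * cos \<beta>) *\<^sub>R vector [vector [0, 0, -1], vector [0, 0, 0], vector [1, 0, 0]]"

definition Xm :: "real \<Rightarrow> real \<Rightarrow> real \<Rightarrow> real \<Rightarrow> real^3^3" where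
  "Xm a b \<alpha> \<beta> = Fm \<alpha> + a *\<^sub>R G1m \<alpha> \<beta> + b *\<^sub>R G2m \<alpha> \<beta>"

definition s_max :: "real \<Rightarrow> real" where
  "s_max \<alpha> = arccos (- (sin \<alpha>)\<^sup>2 / (1 + (cos \<alpha>)\<^sup>2))"

definition vdur :: "real \<Rightarrow> real \<Rightarrow> real" where
  "vdur s \<alpha> =
     (let A = 8 * cos \<alpha> * (sin \<alpha>)\<^sup>2 * sin s;
          B = 2 * (sin (2 * \<alpha>))\<^sup>2 * cos s;
          C = 4 * (sin \<alpha>) ^ 4 * cos (2 * s);
          d = (sin (2 * \<alpha>))\<^sup>2;
          e = 5 + 2 * cos (2 * \<alpha>) + cos (4 * \<alpha>)
      in arccos ((d - A - B - C) / (e - A + B)))"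

definition Mbar :: "real \<Rightarrow> real \<Rightarrow> real \<Rightarrow> real^3^3" where
  "Mbar \<beta> s \<alpha> =
     mat_exp (vdur s \<alpha> *\<^sub>R Xm 1 1 \<alpha> \<beta>) ** mat_exp (vdur s \<alpha> *\<^sub>R Xm (-1) 1 \<alpha> \<beta>) **
     mat_exp (vdur s \<alpha> *\<^sub>R Xm (-1) (-1) \<alpha> \<beta>) ** mat_exp (vdur s \<alpha> *\<^sub>R Xm 1 (-1) \<alpha> \<beta>)"

definition Npole :: "real^3" where
  "Npole = vector [0, 0, 1]"

definition theta :: "real \<Rightarrow> real" where
  "theta \<alpha> = arcsin (- 2 * sqrt 2 * sin \<alpha> * cos \<alpha> / (1 + (cos \<alpha>)\<^sup>2))"

end

theory Submission
  imports Defs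
begin

text \<open>For \<open>\<beta> = \<pi>/4\<close> every \<open>X\<^sub>a\<^sub>b\<close> is the cross-product matrix of a unit vector, so by Rodrigues'
  formula \<open>e\<^sup>t\<^sup>X\<close> is a rotation. Both \<open>v(0)\<close> and \<open>v(s\<^sub>m\<^sub>a\<^sub>x)\<close> equal \<open>s\<^sub>m\<^sub>a\<^sub>x\<close>, and at
  \<open>t = s\<^sub>m\<^sub>a\<^sub>x\<close> the four rotations factor as \<open>R(\<theta>) Q\<close>, \<open>Q R(-\<theta>)\<close>, \<open>R(-\<theta>) Q\<close>, \<open>Q R(\<theta>)\<close>,
  where \<open>R\<close> is the rotation about the x-axis and \<open>Q\<close> the quarter turn about the z-axis.
  Since the half turn \<open>Q\<^sup>2\<close> conjugates \<open>R(\<psi>)\<close> to \<open>R(-\<psi>)\<close>, the product \<open>M\<close> is \<open>R(4\<theta>)\<close>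
  for both values of \<open>s\<close>. Finally \<open>Q\<close> fixes \<open>N\<close>, and \<open>R(\<psi>)\<close> moves the point at angle \<open>b\<close>
  of the great circle \<open>x = 0\<close> to angle \<open>b + \<psi>\<close>.\<close>

section \<open>Rodrigues' formula\<close>

lemma matrix_mul_minus_right: "(A::'a::ring_1^'n^'m) ** (- B) = - (A ** B)"
  by (simp add: matrix_matrix_mult_def vec_eq_iff sum_negf)

lemma mat_pow_scaleR: "mat_pow (t *\<^sub>R K) k = t ^ k *\<^sub>R mat_pow K k"
  by (induction k) (simp_all add: matrix_scalar_ac scalar_matrix_assoc[symmetric])

lemma mat_pow_of_cube_eq_neg:
  fixes K :: "real^'n^'n"
  assumes cube: "K ** (K ** K) = - K"
  shows "mat_pow K (2 * m + 1) = (-1) ^ m *\<^sub>R K \<and> mat_pow K (2 * m + 2) = (-1) ^ m *\<^sub>R (K ** K)"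
proof (induction m)
  case 0
  then show ?case by simp
next
  case (Suc m)
  have odd: "mat_pow K (2 * Suc m + 1) = (-1) ^ Suc m *\<^sub>R K"
    using Suc cube by (simp add: matrix_scalar_ac scalar_matrix_assoc[symmetric] numeral_eq_Suc)
  then have "mat_pow K (2 * Suc m + 2) = (-1) ^ Suc m *\<^sub>R (K ** K)"
    by (simp add: matrix_mul_minus_right matrix_scalar_ac scalar_matrix_assoc[symmetric] numeral_eq_Suc)
  with odd show ?case ..
qed

lemma mat_exp_series_term_of_cube_eq_neg:
  fixes K :: "real^'n^'n"
  assumes cube: "K ** (K ** K) = - K"
  shows "(1 / fact k) *\<^sub>R mat_pow (t *\<^sub>R K) k =
    (if k = 0 then mat 1 + K ** K else 0)
    + (sin_coeff k * t ^ k) *\<^sub>R K - (cos_coeff k * t ^ k) *\<^sub>R (K ** K)"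
proof -
  consider "k = 0" | m where "k = 2 * m + 1" | m where "k = 2 * m + 2"
  proof -
    have "k = 0 \<or> (\<exists>m. k = 2 * m + 1) \<or> (\<exists>m. k = 2 * m + 2)" by presburger
    then show ?thesis using that by blast
  qed
  then show ?thesis
  proof cases
    case 1
    then show ?thesis by (simp add: cos_coeff_def sin_coeff_def)
  next
    case (2 m)
    then show ?thesis
      using conjunct1[OF mat_pow_of_cube_eq_neg[OF cube, of m]]
      by (simp add: mat_pow_scaleR sin_coeff_def cos_coeff_def del: mat_pow.simps)
  next
    case (3 m)
    then show ?thesis
      using conjunct2[OF mat_pow_of_cube_eq_neg[OF cube, of m]]
      by (simp add: mat_pow_scaleR sin_coeff_def cos_coeff_def del: mat_pow.simps)
  qed
qed

lemma mat_exp_rodrigues: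
  fixes K :: "real^'n^'n"
  assumes cube: "K ** (K ** K) = - K"
  shows "mat_exp (t *\<^sub>R K) = mat 1 + sin t *\<^sub>R K + (1 - cos t) *\<^sub>R (K ** K)"
proof -
  have "(\<lambda>k. if k = 0 then mat 1 + K ** K else 0) sums (mat 1 + K ** K)"
    using sums_single[of 0 "\<lambda>_. mat 1 + K ** K"] by simp
  moreover have "(\<lambda>k. (sin_coeff k * t ^ k) *\<^sub>R K) sums (sin t *\<^sub>R K)"
    using sums_scaleR_left[OF sin_converges[of t]] by simp
  moreover have "(\<lambda>k. (cos_coeff k * t ^ k) *\<^sub>R (K ** K)) sums (cos t *\<^sub>R (K ** K))"
    using sums_scaleR_left[OF cos_converges[of t]] by simp
  ultimately have "(\<lambda>k. (1 / fact k) *\<^sub>R mat_pow (t *\<^sub>R K) k) sums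
      (mat 1 + K ** K + sin t *\<^sub>R K - cos t *\<^sub>R (K ** K))"
    unfolding mat_exp_series_term_of_cube_eq_neg[OF cube] by (intro sums_add sums_diff)
  then show ?thesis
    unfolding mat_exp_def by (simp add: sums_iff algebra_simps)
qed

lemma matrix_inv_unique:
  fixes A B :: "'a::semiring_1^'n^'n"
  assumes "A ** B = mat 1" and "B ** A = mat 1"
  shows "matrix_inv A = B"
proof -
  have "A ** matrix_inv A = mat 1 \<and> matrix_inv A ** A = mat 1"
    unfolding matrix_inv_def using assms by (rule someI[of _ B, OF conjI])
  then have "matrix_inv A = matrix_inv A ** (A ** B)" "matrix_inv A ** A = mat 1"
    using assms by simp_all
  then show ?thesis by (simp add: matrix_mul_assoc)
qed

section \<open>Rotations of \<open>\<real>\<^sup>3\<close>\<close>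

text \<open>\<open>rot_x \<phi>\<close> is the rotation by \<open>-\<phi>\<close> about the x-axis, so that on the circle \<open>x = 0\<close> it
  advances the angle measured from \<open>N\<close> towards the y-axis by \<open>\<phi>\<close>.\<close>

definition rot_x :: "real \<Rightarrow> real^3^3" where
  "rot_x \<phi> = vector [vector [1, 0, 0], vector [0, cos \<phi>, sin \<phi>], vector [0, - sin \<phi>, cos \<phi>]]"

definition quarter_turn_z :: "real^3^3" where
  "quarter_turn_z = vector [vector [0, -1, 0], vector [1, 0, 0], vector [0, 0, 1]]"

definition cross_matrix :: "real \<Rightarrow> real \<Rightarrow> real \<Rightarrow> real^3^3" where
  "cross_matrix x y z = vector [vector [0, -z, y], vector [z, 0, -x], vector [-y, x, 0]]"

lemma rot_x_0: "rot_x 0 = mat 1"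
  by (simp add: rot_x_def vec_eq_iff forall_3 mat_def)

lemma rot_x_add: "rot_x a ** rot_x b = rot_x (a + b)"
  by (simp add: rot_x_def vec_eq_iff forall_3 matrix_matrix_mult_def sum_3 sin_add cos_add algebra_simps)

lemma mat_pow_rot_x: "mat_pow (rot_x a) n = rot_x (real n * a)"
  by (induction n) (simp_all add: rot_x_0 rot_x_add algebra_simps)

lemma mat_zpow_rot_x: "mat_zpow (rot_x a) n = rot_x (of_int n * a)"
proof -
  have "matrix_inv (rot_x a) = rot_x (- a)"
    by (rule matrix_inv_unique) (simp_all add: rot_x_add rot_x_0)
  then show ?thesis
    by (simp add: mat_zpow_def mat_pow_rot_x)
qed

lemma rot_x_Npole: "rot_x a *v Npole = vector [0, sin a, cos a]"
  by (simp add: rot_x_def Npole_def vec_eq_iff forall_3 matrix_vector_mult_def sum_3)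

lemma rot_x_mult_vector:
  "rot_x a *v vector [0, sin b, cos b] = vector [0, sin (b + a), cos (b + a)]"
  by (simp add: rot_x_def vec_eq_iff forall_3 matrix_vector_mult_def sum_3 sin_add cos_add algebra_simps)

lemma quarter_turn_z_Npole: "quarter_turn_z *v Npole = Npole"
  by (simp add: quarter_turn_z_def Npole_def vec_eq_iff forall_3 matrix_vector_mult_def sum_3)

lemma half_turn_z_rot_x:
  "quarter_turn_z ** quarter_turn_z ** rot_x \<psi> = rot_x (- \<psi>) ** quarter_turn_z ** quarter_turn_z"
  by (simp add: quarter_turn_z_def rot_x_def vec_eq_iff forall_3 matrix_matrix_mult_def sum_3)

lemma quarter_turn_z_pow4: "quarter_turn_z ** quarter_turn_z ** quarter_turn_z ** quarter_turn_z = mat 1"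
  by (simp add: quarter_turn_z_def vec_eq_iff forall_3 matrix_matrix_mult_def sum_3 mat_def)

lemma cross_matrix_cube:
  assumes "x\<^sup>2 + y\<^sup>2 + z\<^sup>2 = 1"
  shows "cross_matrix x y z ** (cross_matrix x y z ** cross_matrix x y z) = - cross_matrix x y z"
  using assms
  by (simp add: cross_matrix_def vec_eq_iff forall_3 matrix_matrix_mult_def sum_3) algebra

text \<open>The hypotheses describe \<open>p = sin \<alpha> / \<surd>2\<close>, \<open>w = cos \<alpha>\<close>, \<open>(c, s) = (cos s\<^sub>m\<^sub>a\<^sub>x, sin s\<^sub>m\<^sub>a\<^sub>x)\<close>
  and \<open>\<phi> = \<theta>(\<alpha>)\<close>.\<close>

lemma rodrigues_eq_rot_x_quarter_turn_z:
  fixes p w c s \<phi> :: real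
  defines "K \<equiv> cross_matrix p (- p) w" and "L \<equiv> cross_matrix (- p) (- p) w"
  assumes unit: "2 * p\<^sup>2 + w\<^sup>2 = 1"
    and c: "c * (1 + w\<^sup>2) = w\<^sup>2 - 1" and s: "s * (1 + w\<^sup>2) = 2 * w"
    and cos_\<phi>: "cos \<phi> * (1 + w\<^sup>2) = 3 * w\<^sup>2 - 1" and sin_\<phi>: "sin \<phi> * (1 + w\<^sup>2) = - 4 * p * w"
  shows "mat 1 + s *\<^sub>R K + (1 - c) *\<^sub>R (K ** K) = rot_x \<phi> ** quarter_turn_z"
    and "mat 1 + s *\<^sub>R L + (1 - c) *\<^sub>R (L ** L) = quarter_turn_z ** rot_x (- \<phi>)"
proof -
  have "1 + w\<^sup>2 \<noteq> 0" by (smt (verit) zero_le_power2)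
  note hyps = this unit c s cos_\<phi> sin_\<phi>
  show "mat 1 + s *\<^sub>R K + (1 - c) *\<^sub>R (K ** K) = rot_x \<phi> ** quarter_turn_z"
    unfolding K_def cross_matrix_def rot_x_def quarter_turn_z_def
    by (simp add: vec_eq_iff forall_3 matrix_matrix_mult_def sum_3 mat_def)
      (intro conjI; use hyps in algebra)
  show "mat 1 + s *\<^sub>R L + (1 - c) *\<^sub>R (L ** L) = quarter_turn_z ** rot_x (- \<phi>)"
    unfolding L_def cross_matrix_def rot_x_def quarter_turn_z_def
    by (simp add: vec_eq_iff forall_3 matrix_matrix_mult_def sum_3 mat_def)
      (intro conjI; use hyps in algebra)
qed

section \<open>The duration \<open>s\<^sub>m\<^sub>a\<^sub>x\<close> and the angle \<open>\<theta>\<close>\<close>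

lemma pythagorean_quotient:
  fixes x y d :: real
  assumes "x\<^sup>2 + y\<^sup>2 = d\<^sup>2" and "0 < d"
  shows "\<bar>x / d\<bar> \<le> 1" and "sqrt (1 - (x / d)\<^sup>2) = \<bar>y\<bar> / d"
proof -
  have eq: "1 - (x / d)\<^sup>2 = (y / d)\<^sup>2"
    using assms by (simp add: field_simps)
  then have "(x / d)\<^sup>2 \<le> 1" by (smt (verit) zero_le_power2)
  then show "\<bar>x / d\<bar> \<le> 1" by (simp add: abs_square_le_1)
  show "sqrt (1 - (x / d)\<^sup>2) = \<bar>y\<bar> / d"
    using assms(2) by (simp add: eq)
qed

lemma one_plus_cos_squared_pos: "0 < 1 + (cos (\<alpha>::real))\<^sup>2"
  by (smt (verit) zero_le_power2)

lemma
  shows cos_s_max: "cos (s_max \<alpha>) = - (sin \<alpha>)\<^sup>2 / (1 + (cos \<alpha>)\<^sup>2)"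
    and sin_s_max: "sin (s_max \<alpha>) = 2 * \<bar>cos \<alpha>\<bar> / (1 + (cos \<alpha>)\<^sup>2)"
proof -
  have "(- (sin \<alpha>)\<^sup>2)\<^sup>2 + (2 * cos \<alpha>)\<^sup>2 = (1 + (cos \<alpha>)\<^sup>2)\<^sup>2"
    using sin_squared_eq[of \<alpha>] by algebra
  note q = pythagorean_quotient[OF this one_plus_cos_squared_pos]
  show "cos (s_max \<alpha>) = - (sin \<alpha>)\<^sup>2 / (1 + (cos \<alpha>)\<^sup>2)"
    unfolding s_max_def using q(1) by (simp add: cos_arccos_abs)
  show "sin (s_max \<alpha>) = 2 * \<bar>cos \<alpha>\<bar> / (1 + (cos \<alpha>)\<^sup>2)"
    unfolding s_max_def using q by (simp add: sin_arccos_abs abs_mult)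
qed

lemma
  shows sin_theta: "sin (theta \<alpha>) = - 2 * sqrt 2 * sin \<alpha> * cos \<alpha> / (1 + (cos \<alpha>)\<^sup>2)"
    and cos_theta: "cos (theta \<alpha>) = \<bar>3 * (cos \<alpha>)\<^sup>2 - 1\<bar> / (1 + (cos \<alpha>)\<^sup>2)"
proof -
  have "(- 2 * sqrt 2 * sin \<alpha> * cos \<alpha>)\<^sup>2 + (3 * (cos \<alpha>)\<^sup>2 - 1)\<^sup>2 = (1 + (cos \<alpha>)\<^sup>2)\<^sup>2"
  proof -
    have "(sqrt 2)\<^sup>2 = (2::real)" by simp
    then show ?thesis
      by (simp add: power_mult_distrib sin_squared_eq) (simp add: power2_eq_square algebra_simps)
  qed
  note q = pythagorean_quotient[OF this one_plus_cos_squared_pos]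
  then have lower: "- 1 \<le> - 2 * sqrt 2 * sin \<alpha> * cos \<alpha> / (1 + (cos \<alpha>)\<^sup>2)"
    and upper: "- 2 * sqrt 2 * sin \<alpha> * cos \<alpha> / (1 + (cos \<alpha>)\<^sup>2) \<le> 1"
    unfolding abs_le_iff by linarith+
  show "sin (theta \<alpha>) = - 2 * sqrt 2 * sin \<alpha> * cos \<alpha> / (1 + (cos \<alpha>)\<^sup>2)"
    unfolding theta_def using lower upper by (rule sin_arcsin)
  show "cos (theta \<alpha>) = \<bar>3 * (cos \<alpha>)\<^sup>2 - 1\<bar> / (1 + (cos \<alpha>)\<^sup>2)"
    unfolding theta_def cos_arcsin[OF lower upper] by (rule q(2))
qed

lemma vdur_reduced:
  fixes s \<alpha> :: real
  defines "u \<equiv> sin \<alpha>" and "w \<equiv> cos \<alpha>"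
  shows "vdur s \<alpha> =
    arccos (u\<^sup>2 * (w\<^sup>2 - 2 * w * sin s - 2 * w\<^sup>2 * cos s - u\<^sup>2 * cos (2 * s))
          / (u\<^sup>2 + 2 * w ^ 4 - 2 * w * u\<^sup>2 * sin s + 2 * u\<^sup>2 * w\<^sup>2 * cos s))"
proof -
  have uw: "u\<^sup>2 + w\<^sup>2 = 1" unfolding u_def w_def by simp
  have s2: "sin (2 * \<alpha>) = 2 * u * w" unfolding u_def w_def by (rule sin_double)
  have c2: "cos (2 * \<alpha>) = w\<^sup>2 - u\<^sup>2" unfolding u_def w_def by (rule cos_double)
  have c4: "cos (4 * \<alpha>) = (w\<^sup>2 - u\<^sup>2)\<^sup>2 - (2 * u * w)\<^sup>2"
    using cos_double[of "2 * \<alpha>"] s2 c2 by simp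
  let ?n = "u\<^sup>2 * (w\<^sup>2 - 2 * w * sin s - 2 * w\<^sup>2 * cos s - u\<^sup>2 * cos (2 * s))"
  let ?d = "u\<^sup>2 + 2 * w ^ 4 - 2 * w * u\<^sup>2 * sin s + 2 * u\<^sup>2 * w\<^sup>2 * cos s"
  have num: "(2 * u * w)\<^sup>2 - 8 * w * u\<^sup>2 * sin s - 2 * (2 * u * w)\<^sup>2 * cos s - 4 * u ^ 4 * cos (2 * s)
      = 4 * ?n"
    by algebra
  have den: "5 + 2 * (w\<^sup>2 - u\<^sup>2) + ((w\<^sup>2 - u\<^sup>2)\<^sup>2 - (2 * u * w)\<^sup>2) - 8 * w * u\<^sup>2 * sin s
      + 2 * (2 * u * w)\<^sup>2 * cos s = 4 * ?d"
    using uw by algebra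
  show ?thesis
    unfolding vdur_def Let_def s2 c2 c4 u_def[symmetric] w_def[symmetric] num den
    by (simp only: mult_divide_mult_cancel_left_if) simp
qed

lemma vdur_0: "vdur 0 \<alpha> = s_max \<alpha>"
proof -
  have uw: "(sin \<alpha>)\<^sup>2 + (cos \<alpha>)\<^sup>2 = 1" by simp
  have "(sin \<alpha>)\<^sup>2 * ((cos \<alpha>)\<^sup>2 - 2 * (cos \<alpha>)\<^sup>2 - (sin \<alpha>)\<^sup>2) = - (sin \<alpha>)\<^sup>2"
    and "(sin \<alpha>)\<^sup>2 + 2 * cos \<alpha> ^ 4 + 2 * (sin \<alpha>)\<^sup>2 * (cos \<alpha>)\<^sup>2 = 1 + (cos \<alpha>)\<^sup>2"
    using uw by algebra+
  then show ?thesis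
    unfolding vdur_reduced s_max_def by simp
qed

lemma vdur_s_max:
  assumes "0 \<le> cos \<alpha>" and "3 * (cos \<alpha>)\<^sup>2 \<noteq> 1"
  shows "vdur (s_max \<alpha>) \<alpha> = s_max \<alpha>"
proof -
  define u w D where "u = sin \<alpha>" and "w = cos \<alpha>" and "D = 1 + (cos \<alpha>)\<^sup>2"
  define y z where "y = sin (s_max \<alpha>)" and "z = cos (s_max \<alpha>)"
  have uw: "u\<^sup>2 + w\<^sup>2 = 1" and D: "D = 1 + w\<^sup>2" and "D \<noteq> 0"
    using one_plus_cos_squared_pos[of \<alpha>] by (simp_all add: u_def w_def D_def)
  have zD: "z * D = - u\<^sup>2"
    using \<open>D \<noteq> 0\<close> by (simp add: z_def cos_s_max u_def D_def)
  have yD: "y * D = 2 * w"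
    using \<open>D \<noteq> 0\<close> assms(1) by (simp add: y_def sin_s_max w_def D_def)
  have c2: "cos (2 * s_max \<alpha>) = z\<^sup>2 - y\<^sup>2"
    unfolding y_def z_def by (rule cos_double)
  define n d where
    "n = u\<^sup>2 * (w\<^sup>2 - 2 * w * y - 2 * w\<^sup>2 * z - u\<^sup>2 * (z\<^sup>2 - y\<^sup>2))" and
    "d = u\<^sup>2 + 2 * w ^ 4 - 2 * w * u\<^sup>2 * y + 2 * u\<^sup>2 * w\<^sup>2 * z"
  have "d * D = (3 * w\<^sup>2 - 1)\<^sup>2"
    unfolding d_def using uw D yD zD by algebra
  then have "d \<noteq> 0"
    using assms(2) by (auto simp: w_def)
  have "n * D = - u\<^sup>2 * d"
    unfolding n_def d_def using uw D yD zD \<open>D \<noteq> 0\<close> by algebra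
  then have quotient: "n / d = - u\<^sup>2 / D"
    using \<open>d \<noteq> 0\<close> \<open>D \<noteq> 0\<close> by (simp add: field_simps)
  have "vdur (s_max \<alpha>) \<alpha> = arccos (n / d)"
    unfolding vdur_reduced c2 by (simp add: n_def d_def u_def w_def y_def z_def)
  also have "\<dots> = s_max \<alpha>"
    unfolding quotient by (simp add: s_max_def u_def D_def)
  finally show ?thesis .
qed

lemma cos_bounds_below_pi_4:
  fixes \<alpha> :: real
  assumes "0 < \<alpha>" and "\<alpha> < pi / 4"
  shows "0 < cos \<alpha>" and "1 / 2 < (cos \<alpha>)\<^sup>2"
proof -
  show "0 < cos \<alpha>" using assms by (intro cos_gt_zero) auto
  have "sqrt 2 / 2 < cos \<alpha>"
    using assms cos_monotone_0_pi[of \<alpha> "pi / 4"] by (simp add: cos_45)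
  then have "(sqrt 2 / 2)\<^sup>2 < (cos \<alpha>)\<^sup>2" by (intro power_strict_mono) auto
  then show "1 / 2 < (cos \<alpha>)\<^sup>2" by (simp add: power_divide)
qed

section \<open>The product of four bang arcs\<close>

lemma Xm_pi_4:
  "Xm a b \<alpha> (pi / 4) = cross_matrix (a * sin \<alpha> * sqrt 2 / 2) (- b * sin \<alpha> * sqrt 2 / 2) (cos \<alpha>)"
  by (simp add: Xm_def Fm_def G1m_def G2m_def cross_matrix_def sin_45 cos_45 vec_eq_iff forall_3)

lemma mat_exp_s_max_Xm:
  fixes \<alpha> :: real
  assumes "0 \<le> cos \<alpha>" and "1 \<le> 3 * (cos \<alpha>)\<^sup>2"
  shows "mat_exp (s_max \<alpha> *\<^sub>R Xm 1 1 \<alpha> (pi / 4)) = rot_x (theta \<alpha>) ** quarter_turn_z"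
    and "mat_exp (s_max \<alpha> *\<^sub>R Xm (-1) 1 \<alpha> (pi / 4)) = quarter_turn_z ** rot_x (- theta \<alpha>)"
    and "mat_exp (s_max \<alpha> *\<^sub>R Xm (-1) (-1) \<alpha> (pi / 4)) = rot_x (- theta \<alpha>) ** quarter_turn_z"
    and "mat_exp (s_max \<alpha> *\<^sub>R Xm 1 (-1) \<alpha> (pi / 4)) = quarter_turn_z ** rot_x (theta \<alpha>)"
proof -
  define p w where "p = sin \<alpha> * sqrt 2 / 2" and "w = cos \<alpha>"
  have "1 + w\<^sup>2 \<noteq> 0"
    using one_plus_cos_squared_pos[of \<alpha>] by (simp add: w_def)
  have unit: "2 * p\<^sup>2 + w\<^sup>2 = 1"
    by (simp add: p_def w_def power_mult_distrib power_divide)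
  have c: "cos (s_max \<alpha>) * (1 + w\<^sup>2) = w\<^sup>2 - 1"
    using \<open>1 + w\<^sup>2 \<noteq> 0\<close> sin_squared_eq[of \<alpha>] by (simp add: cos_s_max w_def)
  have s: "sin (s_max \<alpha>) * (1 + w\<^sup>2) = 2 * w"
    using \<open>1 + w\<^sup>2 \<noteq> 0\<close> assms(1) by (simp add: sin_s_max w_def)
  have cos_\<theta>: "cos (theta \<alpha>) * (1 + w\<^sup>2) = 3 * w\<^sup>2 - 1"
    using \<open>1 + w\<^sup>2 \<noteq> 0\<close> assms(2) by (simp add: cos_theta w_def)
  have sin_\<theta>: "sin (theta \<alpha>) * (1 + w\<^sup>2) = - 4 * p * w"
    using \<open>1 + w\<^sup>2 \<noteq> 0\<close> by (simp add: sin_theta p_def w_def)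
  have exp: "mat_exp (t *\<^sub>R cross_matrix x y w) =
      mat 1 + sin t *\<^sub>R cross_matrix x y w + (1 - cos t) *\<^sub>R (cross_matrix x y w ** cross_matrix x y w)"
    if "x\<^sup>2 + y\<^sup>2 + w\<^sup>2 = 1" for t x y
    using mat_exp_rodrigues[OF cross_matrix_cube[OF that]] .
  have units: "p\<^sup>2 + (- p)\<^sup>2 + w\<^sup>2 = 1" "(- p)\<^sup>2 + (- p)\<^sup>2 + w\<^sup>2 = 1"
      "(- p)\<^sup>2 + p\<^sup>2 + w\<^sup>2 = 1" "p\<^sup>2 + p\<^sup>2 + w\<^sup>2 = 1"
    using unit by simp_all
  note R = rodrigues_eq_rot_x_quarter_turn_z[OF unit c s cos_\<theta> sin_\<theta>]
  note R' = rodrigues_eq_rot_x_quarter_turn_z[of "- p" w, OF _ c s, of "- theta \<alpha>"]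
  have X: "Xm 1 1 \<alpha> (pi / 4) = cross_matrix p (- p) w" "Xm (-1) 1 \<alpha> (pi / 4) = cross_matrix (- p) (- p) w"
      "Xm (-1) (-1) \<alpha> (pi / 4) = cross_matrix (- p) p w" "Xm 1 (-1) \<alpha> (pi / 4) = cross_matrix p p w"
    by (simp_all add: Xm_pi_4 p_def w_def)
  show "mat_exp (s_max \<alpha> *\<^sub>R Xm 1 1 \<alpha> (pi / 4)) = rot_x (theta \<alpha>) ** quarter_turn_z"
    unfolding X exp[OF units(1)] by (rule R(1))
  show "mat_exp (s_max \<alpha> *\<^sub>R Xm (-1) 1 \<alpha> (pi / 4)) = quarter_turn_z ** rot_x (- theta \<alpha>)"
    unfolding X exp[OF units(2)] by (rule R(2))
  show "mat_exp (s_max \<alpha> *\<^sub>R Xm (-1) (-1) \<alpha> (pi / 4)) = rot_x (- theta \<alpha>) ** quarter_turn_z"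
    unfolding X exp[OF units(3)] using R'(1) unit cos_\<theta> sin_\<theta> by simp
  show "mat_exp (s_max \<alpha> *\<^sub>R Xm 1 (-1) \<alpha> (pi / 4)) = quarter_turn_z ** rot_x (theta \<alpha>)"
    unfolding X exp[OF units(4)] using R'(2) unit cos_\<theta> sin_\<theta> by simp
qed

lemma Mbar_pi_4_eq_rot_x:
  assumes "0 \<le> cos \<alpha>" and "1 \<le> 3 * (cos \<alpha>)\<^sup>2" and "vdur s \<alpha> = s_max \<alpha>"
  shows "Mbar (pi / 4) s \<alpha> = rot_x (4 * theta \<alpha>)"
proof -
  let ?Q = quarter_turn_z and ?\<theta> = "theta \<alpha>"
  have split: "rot_x (- 2 * ?\<theta>) = rot_x (- ?\<theta>) ** rot_x (- ?\<theta>)"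
    by (simp add: rot_x_add)
  have "Mbar (pi / 4) s \<alpha> = rot_x ?\<theta> ** ?Q ** (?Q ** rot_x (- ?\<theta>)) ** (rot_x (- ?\<theta>) ** ?Q) ** (?Q ** rot_x ?\<theta>)"
    unfolding Mbar_def assms(3) mat_exp_s_max_Xm[OF assms(1,2)] ..
  also have "\<dots> = rot_x ?\<theta> ** (?Q ** ?Q ** rot_x (- 2 * ?\<theta>)) ** ?Q ** ?Q ** rot_x ?\<theta>"
    unfolding split by (simp add: matrix_mul_assoc)
  also have "\<dots> = rot_x ?\<theta> ** rot_x (2 * ?\<theta>) ** (?Q ** ?Q ** ?Q ** ?Q) ** rot_x ?\<theta>"
    unfolding half_turn_z_rot_x by (simp add: matrix_mul_assoc)
  also have "\<dots> = rot_x (4 * ?\<theta>)"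
    by (simp add: quarter_turn_z_pow4 rot_x_add)
  finally show ?thesis .
qed

theorem proposition6:
  fixes n :: int and \<alpha> :: real
  assumes "0 < \<alpha>" and "\<alpha> < pi / 4"
  shows "mat_zpow (Mbar (pi / 4) 0 \<alpha>) n *v Npole
           = vector [0, sin (4 * of_int n * theta \<alpha>), cos (4 * of_int n * theta \<alpha>)]
       \<and> mat_zpow (Mbar (pi / 4) (s_max \<alpha>) \<alpha>) n *v (mat_exp (s_max \<alpha> *\<^sub>R Xm 1 1 \<alpha> (pi / 4)) *v Npole)
           = vector [0, sin ((4 * of_int n + 1) * theta \<alpha>), cos ((4 * of_int n + 1) * theta \<alpha>)]"
proof -
  obtain "0 \<le> cos \<alpha>" and "1 < 3 * (cos \<alpha>)\<^sup>2"
    using cos_bounds_below_pi_4[OF assms] by fastforce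
  then have M: "Mbar (pi / 4) s \<alpha> = rot_x (4 * theta \<alpha>)" if "vdur s \<alpha> = s_max \<alpha>" for s
    using Mbar_pi_4_eq_rot_x that by simp
  have "mat_exp (s_max \<alpha> *\<^sub>R Xm 1 1 \<alpha> (pi / 4)) *v Npole = vector [0, sin (theta \<alpha>), cos (theta \<alpha>)]"
    using mat_exp_s_max_Xm(1) \<open>0 \<le> cos \<alpha>\<close> \<open>1 < _\<close>
    by (simp add: quarter_turn_z_Npole rot_x_Npole flip: matrix_vector_mul_assoc)
  then show ?thesis
    using vdur_0 vdur_s_max[OF \<open>0 \<le> cos \<alpha>\<close>] \<open>1 < _\<close>
    by (simp add: M mat_zpow_rot_x rot_x_Npole rot_x_mult_vector algebra_simps)
qed

end
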